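(* Let $K$ be a compact space, $|\cdot|$ a norm on $\mathbb{R}^n$, $f\colon K\to\mathbb{R}^n$ a continuous function and $\alpha>0$. Then every $\alpha$-perturbation of $f$ has a root in $K$ if and only if the restriction $f|_{|f|^{-1}(\{\alpha\})}$ cannot be extended to a continuous map $|f|^{-1}([0,\alpha])\to\mathbb{R}^n\setminus\{0\}$.
   Context: Here $|f|\colon K\to[0,\infty)$ denotes $x\mapsto|f(x)|$. An $\alpha$-perturbation of $f$ is a continuous function $g\colon K\to\mathbb{R}^n$ with $\max_{x\in K}|g(x)-f(x)|\le\alpha$. *)

theory Defs
  imports "HOL-Analysis.Analysis"
begin

definition is_norm :: "(real ^ 'n \<Rightarrow> real) \<Rightarrow> bool" where
  "is_norm N \<longleftrightarrow>
     (\<forall>x. N x = 0 \<longleftrightarrow> x = 0) \<and>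
     (\<forall>x y. N (x + y) \<le> N x + N y) \<and>
     (\<forall>c x. N (c *\<^sub>R x) = \<bar>c\<bar> * N x)"

definition perturbation ::
  "'a topology \<Rightarrow> (real ^ 'n \<Rightarrow> real) \<Rightarrow> real \<Rightarrow> ('a \<Rightarrow> real ^ 'n) \<Rightarrow> ('a \<Rightarrow> real ^ 'n) \<Rightarrow> bool" where
  "perturbation X N \<alpha> f g \<longleftrightarrow>
     continuous_map X euclidean g \<and> (\<forall>x\<in>topspace X. N (g x - f x) \<le> \<alpha>)"

end

theory Submission
  imports Defs
begin

text \<open>
  Both directions are explicit constructions on the sublevel set A = {|f| \<le> \<alpha>}.
  A continuous h : A \<rightarrow> \<real>^n - {0} agreeing with f on {|f| = \<alpha>} gives a root-free
  perturbation: at x \<in> A move f x in the direction of h x by a vector of norm at most \<alpha>,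
  namely by the distance from f x to the sphere point \<alpha> h x / |h x|, capped at \<alpha>; outside A keep f.
  Conversely, a root-free perturbation g yields such an h by moving from g x along the
  segment towards f x, as far as the defect of the triangle inequality
  |g x - f x| \<le> |f x| + |g x| permits.
\<close>

lemma is_norm_zero: "is_norm N \<Longrightarrow> N 0 = 0"
  by (simp add: is_norm_def)

lemma is_norm_scaleR: "is_norm N \<Longrightarrow> N (c *\<^sub>R x) = \<bar>c\<bar> * N x"
  by (simp add: is_norm_def)

lemma is_norm_triangle: "is_norm N \<Longrightarrow> N (x + y) \<le> N x + N y"
  by (simp add: is_norm_def)

lemma is_norm_minus: "is_norm N \<Longrightarrow> N (- x) = N x"
  using is_norm_scaleR[of N "-1" x] by simp

lemma is_norm_nonneg: "is_norm N \<Longrightarrow> 0 \<le> N x"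
  using is_norm_triangle[of N x "- x"] is_norm_minus[of N x] is_norm_zero[of N] by simp

lemma is_norm_pos: "is_norm N \<Longrightarrow> x \<noteq> 0 \<Longrightarrow> 0 < N x"
  using is_norm_nonneg[of N x] by (auto simp: is_norm_def order_le_less)

lemma is_norm_convex: "is_norm N \<Longrightarrow> convex_on UNIV N"
proof (rule convex_onI)
  fix t :: real and x y assume "is_norm N" "0 < t" "t < 1"
  then show "N ((1 - t) *\<^sub>R x + t *\<^sub>R y) \<le> (1 - t) * N x + t * N y"
    using is_norm_triangle[of N] is_norm_scaleR[of N] by (metis abs_of_pos diff_gt_0_iff_gt order.trans order_refl)
qed simp

lemma continuous_on_is_norm [continuous_intros]:
  assumes "is_norm N" "continuous_on S k"
  shows "continuous_on S (\<lambda>x. N (k x :: real ^ 'n))"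
  using convex_on_continuous[OF open_UNIV is_norm_convex[OF assms(1)]] assms(2)
  by (rule continuous_on_compose2) simp

lemma continuous_map_compose_pair:
  assumes "continuous_map X euclidean f" "continuous_map X euclidean g"
    and "continuous_on S \<Phi>" "\<And>x. x \<in> topspace X \<Longrightarrow> (f x, g x) \<in> S"
  shows "continuous_map X euclidean (\<lambda>x. \<Phi> (f x, g x))"
proof -
  have "continuous_map X (subtopology euclidean S) (\<lambda>x. (f x, g x))"
    using continuous_map_pairedI[OF assms(1,2)] assms(4)
    by (simp add: continuous_map_in_subtopology Pi_iff)
  then show ?thesis
    using continuous_map_compose[of X _ _ euclidean \<Phi>] assms(3) by (simp add: o_def)
qed

text \<open>The result vanishes only if a = -\<alpha> w / N w, i.e. N a = \<alpha> and w points opposite to a.\<close>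

definition push_off :: "(real ^ 'n \<Rightarrow> real) \<Rightarrow> real \<Rightarrow> real ^ 'n \<Rightarrow> real ^ 'n \<Rightarrow> real ^ 'n" where
  "push_off N \<alpha> a w = (let v = (\<alpha> / N w) *\<^sub>R w in a + min 1 (N (v - a) / \<alpha>) *\<^sub>R v)"

lemma continuous_on_push_off:
  assumes "is_norm N" "\<alpha> > 0"
  shows "continuous_on (UNIV \<times> - {0}) (\<lambda>p. push_off N \<alpha> (fst p) (snd p))"
  unfolding push_off_def Let_def
  using assms by (intro continuous_intros) (auto simp: is_norm_def)

lemma push_off_self: "is_norm N \<Longrightarrow> N a = \<alpha> \<Longrightarrow> \<alpha> > 0 \<Longrightarrow> push_off N \<alpha> a a = a"
  by (simp add: push_off_def is_norm_zero)

lemma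
  assumes N: "is_norm N" and "\<alpha> > 0" and "w \<noteq> 0"
  shows push_off_dist: "N (push_off N \<alpha> a w - a) \<le> \<alpha>"
    and push_off_nonzero: "(N a = \<alpha> \<Longrightarrow> w = a) \<Longrightarrow> push_off N \<alpha> a w \<noteq> 0"
proof -
  define v where "v = (\<alpha> / N w) *\<^sub>R w"
  define s where "s = min 1 (N (v - a) / \<alpha>)"
  have Nv: "N v = \<alpha>"
    using is_norm_pos[OF N \<open>w \<noteq> 0\<close>] \<open>\<alpha> > 0\<close> by (simp add: v_def is_norm_scaleR[OF N])
  have s: "0 \<le> s" "s \<le> 1"
    using \<open>\<alpha> > 0\<close> is_norm_nonneg[OF N] by (auto simp: s_def)
  have p: "push_off N \<alpha> a w = a + s *\<^sub>R v"
    by (simp add: push_off_def v_def s_def)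
  show "N (push_off N \<alpha> a w - a) \<le> \<alpha>"
    using s Nv \<open>\<alpha> > 0\<close> by (simp add: p is_norm_scaleR[OF N])
  assume boundary: "N a = \<alpha> \<Longrightarrow> w = a"
  show "push_off N \<alpha> a w \<noteq> 0"
  proof
    assume "push_off N \<alpha> a w = 0"
    then have a: "a = - (s *\<^sub>R v)"
      by (simp add: p add_eq_0_iff2)
    then have "N (v - a) = (1 + s) * \<alpha>"
      using s Nv is_norm_scaleR[OF N, of "1 + s" v] by (simp add: algebra_simps)
    then have "N (v - a) / \<alpha> = 1 + s"
      using \<open>\<alpha> > 0\<close> by simp
    then have "s = 1"
      using s unfolding s_def by linarith
    then have "a = - v" "N a = \<alpha>"
      using a Nv is_norm_minus[OF N] by auto
    moreover from \<open>N a = \<alpha>\<close> have "v = a"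
      using boundary \<open>\<alpha> > 0\<close> by (simp add: v_def)
    ultimately have "a + a = 0"
      by simp
    then have "a = 0"
      by (metis scaleR_2 scaleR_eq_0_iff zero_neq_numeral)
    then show False
      using \<open>N a = \<alpha>\<close> \<open>\<alpha> > 0\<close> is_norm_zero[OF N] by simp
  qed
qed

text \<open>
  The segment from b to a passes through 0 only when N (b - a) = N a + N b, and then the
  weight of a is 0.
\<close>

definition triangle_blend :: "(real ^ 'n \<Rightarrow> real) \<Rightarrow> real ^ 'n \<Rightarrow> real ^ 'n \<Rightarrow> real ^ 'n" where
  "triangle_blend N a b = (let \<rho> = min 1 ((N a + N b - N (b - a)) / N b) in (1 - \<rho>) *\<^sub>R b + \<rho> *\<^sub>R a)"

lemma continuous_on_triangle_blend:
  assumes "is_norm N"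
  shows "continuous_on (UNIV \<times> - {0}) (\<lambda>p. triangle_blend N (fst p) (snd p))"
  unfolding triangle_blend_def Let_def
  using assms by (intro continuous_intros) (auto simp: is_norm_def)

lemma triangle_blend_eq_left:
  assumes "is_norm N" "b \<noteq> 0" "N (b - a) \<le> N a"
  shows "triangle_blend N a b = a"
proof -
  have "1 \<le> (N a + N b - N (b - a)) / N b"
    using assms is_norm_pos[OF assms(1,2)] by simp
  then show ?thesis
    by (simp add: triangle_blend_def)
qed

lemma triangle_blend_nonzero:
  assumes N: "is_norm N" and "b \<noteq> 0"
  shows "triangle_blend N a b \<noteq> 0"
proof
  define D where "D = N a + N b - N (b - a)"
  define \<rho> where "\<rho> = min 1 (D / N b)"
  have Nb: "0 < N b"
    using is_norm_pos[OF N \<open>b \<noteq> 0\<close>] .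
  have "N (b - a) \<le> N b + N a"
    using is_norm_triangle[OF N, of b "- a"] is_norm_minus[OF N, of a] by simp
  then have \<rho>: "0 \<le> \<rho>" "\<rho> \<le> 1"
    using Nb by (auto simp: \<rho>_def D_def)
  assume "triangle_blend N a b = 0"
  then have zero: "(1 - \<rho>) *\<^sub>R b + \<rho> *\<^sub>R a = 0"
    by (simp add: triangle_blend_def Let_def \<rho>_def D_def)
  then have "\<rho> \<noteq> 0"
    using \<open>b \<noteq> 0\<close> by auto
  have "\<rho> *\<^sub>R a = - ((1 - \<rho>) *\<^sub>R b)" "\<rho> *\<^sub>R (b - a) = b"
    using zero by (simp_all add: eq_neg_iff_add_eq_0 algebra_simps)
  then have "N (\<rho> *\<^sub>R a) = N ((1 - \<rho>) *\<^sub>R b)" "N (\<rho> *\<^sub>R (b - a)) = N b"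
    using is_norm_minus[OF N] by metis+
  then have "\<rho> * N a = (1 - \<rho>) * N b" "\<rho> * N (b - a) = N b"
    using \<rho> by (simp_all add: is_norm_scaleR[OF N])
  then have "\<rho> * D = 0"
    by (simp add: D_def algebra_simps)
  then have "D = 0"
    using \<open>\<rho> \<noteq> 0\<close> by simp
  then show False
    using \<open>\<rho> \<noteq> 0\<close> by (simp add: \<rho>_def)
qed

lemma rootfree_perturbation_of_extension:
  assumes N: "is_norm N" and f: "continuous_map X euclidean f" and "\<alpha> > 0"
    and h: "continuous_map (subtopology X {x \<in> topspace X. N (f x) \<le> \<alpha>}) (subtopology euclidean (- {0})) h"
    and boundary: "\<And>x. x \<in> topspace X \<Longrightarrow> N (f x) = \<alpha> \<Longrightarrow> h x = f x"
  shows "\<exists>g. perturbation X N \<alpha> f g \<and> (\<forall>x\<in>topspace X. g x \<noteq> 0)"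
proof -
  let ?A = "{x \<in> topspace X. N (f x) \<le> \<alpha>}"
  define g where "g x = (if N (f x) \<le> \<alpha> then push_off N \<alpha> (f x) (h x) else f x)" for x
  have h_nonzero: "h x \<noteq> 0" if "x \<in> ?A" for x
    using h that by (auto simp: continuous_map_in_subtopology Pi_iff)
  have "continuous_map X euclidean g"
    unfolding g_def
  proof (rule continuous_map_cases_le)
    show "continuous_map X euclidean (\<lambda>x. N (f x))"
      using continuous_map_compose[OF f, of euclidean N] continuous_on_is_norm[OF N continuous_on_id]
      by (simp add: o_def)
    show "continuous_map (subtopology X ?A) euclidean (\<lambda>x. push_off N \<alpha> (f x) (h x))"
      using continuous_map_compose_pair[OF continuous_map_from_subtopology[OF f]
          continuous_map_into_fulltopology[OF h] continuous_on_push_off[OF N \<open>\<alpha> > 0\<close>]]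
        h_nonzero by simp
    show "continuous_map (subtopology X {x \<in> topspace X. \<alpha> \<le> N (f x)}) euclidean f"
      using continuous_map_from_subtopology[OF f] .
    fix x assume "x \<in> topspace X" "N (f x) = \<alpha>"
    then show "push_off N \<alpha> (f x) (h x) = f x"
      using boundary push_off_self[OF N _ \<open>\<alpha> > 0\<close>] by simp
  qed simp
  moreover have "N (g x - f x) \<le> \<alpha> \<and> g x \<noteq> 0" if "x \<in> topspace X" for x
  proof (cases "N (f x) \<le> \<alpha>")
    case True
    then show ?thesis
      using that h_nonzero boundary push_off_dist[OF N \<open>\<alpha> > 0\<close>] push_off_nonzero[OF N \<open>\<alpha> > 0\<close>]
      by (simp add: g_def)
  next
    case False
    then show ?thesis
      using \<open>\<alpha> > 0\<close> is_norm_zero[OF N] by (auto simp: g_def)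
  qed
  ultimately show ?thesis
    unfolding perturbation_def by blast
qed

lemma extension_of_rootfree_perturbation:
  assumes N: "is_norm N" and f: "continuous_map X euclidean f"
    and g: "perturbation X N \<alpha> f g" and g_nonzero: "\<forall>x\<in>topspace X. g x \<noteq> 0"
  shows "\<exists>h. continuous_map (subtopology X {x \<in> topspace X. N (f x) \<le> \<alpha>}) (subtopology euclidean (- {0})) h
           \<and> (\<forall>x\<in>topspace X. N (f x) = \<alpha> \<longrightarrow> h x = f x)"
proof (intro exI conjI)
  let ?h = "\<lambda>x. triangle_blend N (f x) (g x)"
  have "continuous_map X euclidean ?h"
    using continuous_map_compose_pair[OF f _ continuous_on_triangle_blend[OF N]] g g_nonzero
    by (simp add: perturbation_def)
  then show "continuous_map (subtopology X {x \<in> topspace X. N (f x) \<le> \<alpha>}) (subtopology euclidean (- {0})) ?h"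
    using triangle_blend_nonzero[OF N] g_nonzero
    by (auto simp: continuous_map_in_subtopology continuous_map_from_subtopology Pi_iff)
  show "\<forall>x\<in>topspace X. N (f x) = \<alpha> \<longrightarrow> ?h x = f x"
    using g g_nonzero triangle_blend_eq_left[OF N] by (simp add: perturbation_def)
qed

theorem lemma3p3:
  fixes X :: "'a topology" and N :: "real ^ 'n \<Rightarrow> real"
    and f :: "'a \<Rightarrow> real ^ 'n" and \<alpha> :: real
  assumes "compact_space X" and "is_norm N"
    and "continuous_map X euclidean f" and "\<alpha> > 0"
  shows "(\<forall>g. perturbation X N \<alpha> f g \<longrightarrow> (\<exists>x\<in>topspace X. g x = 0)) \<longleftrightarrow>
         \<not> (\<exists>h. continuous_map (subtopology X {x \<in> topspace X. N (f x) \<le> \<alpha>})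
                                  (subtopology euclidean (- {0})) h
               \<and> (\<forall>x\<in>topspace X. N (f x) = \<alpha> \<longrightarrow> h x = f x))"
proof
  assume roots: "\<forall>g. perturbation X N \<alpha> f g \<longrightarrow> (\<exists>x\<in>topspace X. g x = 0)"
  show "\<not> (\<exists>h. continuous_map (subtopology X {x \<in> topspace X. N (f x) \<le> \<alpha>})
                                  (subtopology euclidean (- {0})) h
               \<and> (\<forall>x\<in>topspace X. N (f x) = \<alpha> \<longrightarrow> h x = f x))"
  proof
    assume "\<exists>h. continuous_map (subtopology X {x \<in> topspace X. N (f x) \<le> \<alpha>})
                                  (subtopology euclidean (- {0})) h
               \<and> (\<forall>x\<in>topspace X. N (f x) = \<alpha> \<longrightarrow> h x = f x)"
    then obtain g where "perturbation X N \<alpha> f g" "\<forall>x\<in>topspace X. g x \<noteq> 0"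
      using rootfree_perturbation_of_extension[OF assms(2-4)] by blast
    with roots show False
      by blast
  qed
next
  assume no_extension: "\<not> (\<exists>h. continuous_map (subtopology X {x \<in> topspace X. N (f x) \<le> \<alpha>})
                                  (subtopology euclidean (- {0})) h
               \<and> (\<forall>x\<in>topspace X. N (f x) = \<alpha> \<longrightarrow> h x = f x))"
  show "\<forall>g. perturbation X N \<alpha> f g \<longrightarrow> (\<exists>x\<in>topspace X. g x = 0)"
    using extension_of_rootfree_perturbation[OF assms(2,3)] no_extension by blast
qed

end
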